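(* Let $f:\Gamma_+\to\mathbb{R}$ be a smooth function which is homogeneous of degree one and monotone increasing. Then $f\in\mathcal{C}_n$ if and only if $f$ is concave and the function $f_{-1}(x_1,\dots,x_n)=\big(f(x_1^{-1},\dots,x_n^{-1})\big)^{-1}$ is concave on $\Gamma_+$.
   Context: $\Gamma_+=\{x\in\mathbb{R}^n: x_i>0\ \forall i\}$. $\mathcal{C}_n$ is the class of functions $f:\Gamma_+\to\mathbb{R}$ which are $C^\infty$, homogeneous of degree one ($f(cx)=cf(x)$ for $c>0$), strictly monotone increasing ($\partial f/\partial x_i>0$ for each $i$), concave, and inverse-concave, meaning $f^*(x_1,\dots,x_n)=-f(x_1^{-1},\dots,x_n^{-1})$ is concave on $\Gamma_+$. *)

theory Defs
  imports "HOL-Analysis.Analysis"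
begin

definition Gamma_plus :: "(real ^ 'n) set" where
  "Gamma_plus = {x. \<forall>i. x $ i > 0}"

fun higher_differentiable_on ::
  "'a::real_normed_vector set \<Rightarrow> ('a \<Rightarrow> 'b::real_normed_vector) \<Rightarrow> nat \<Rightarrow> bool" where
  "higher_differentiable_on S f 0 = continuous_on S f"
| "higher_differentiable_on S f (Suc n) =
     (f differentiable_on S \<and>
      (\<forall>v. higher_differentiable_on S (\<lambda>x. frechet_derivative f (at x) v) n))"

definition smooth_on ::
  "'a::real_normed_vector set \<Rightarrow> ('a \<Rightarrow> 'b::real_normed_vector) \<Rightarrow> bool" where
  "smooth_on S f = (\<forall>k. higher_differentiable_on S f k)"

definition homogeneous1 :: "(real ^ 'n \<Rightarrow> real) \<Rightarrow> bool" where
  "homogeneous1 f = (\<forall>x \<in> Gamma_plus. \<forall>c > 0. f (c *\<^sub>R x) = c * f x)"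

definition strictly_monotone :: "(real ^ 'n \<Rightarrow> real) \<Rightarrow> bool" where
  "strictly_monotone f =
     (\<forall>x \<in> Gamma_plus. \<forall>i. frechet_derivative f (at x) (axis i 1) > 0)"

definition inv_coords :: "real ^ 'n \<Rightarrow> real ^ 'n" where
  "inv_coords x = (\<chi> i. inverse (x $ i))"

definition fstar :: "(real ^ 'n \<Rightarrow> real) \<Rightarrow> real ^ 'n \<Rightarrow> real" where
  "fstar f x = - f (inv_coords x)"

definition fminus1 :: "(real ^ 'n \<Rightarrow> real) \<Rightarrow> real ^ 'n \<Rightarrow> real" where
  "fminus1 f x = inverse (f (inv_coords x))"

definition class_C :: "(real ^ 'n \<Rightarrow> real) set" where
  "class_C = {f. smooth_on Gamma_plus f \<and> homogeneous1 f \<and> strictly_monotone f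
                 \<and> concave_on Gamma_plus f \<and> concave_on Gamma_plus (fstar f)}"

end

theory Submission
  imports Defs
begin

text \<open>
  For f positive and homogeneous of degree one, f_{-1} is again positive and homogeneous of
  degree one, and -f^* is exactly its reciprocal. So the theorem reduces to the general fact that a
  positive degree-one homogeneous function h on a convex cone is concave iff 1/h is convex.
  One direction holds for any positive concave h, since t \<mapsto> 1/t is convex and decreasing.
  For the other, normalize x and y to the level set {h = 1}: convexity of 1/h gives h \<ge> 1 on
  the segment between the normalized points, and rescaling gives the concavity inequality.
  Positivity of f itself is Euler's identity f(x) = Df(x) x = \<Sum>i x_i \<partial>_i f(x).
\<close>

lemma convex_on_inverse_of_concave:
  assumes h: "concave_on S h" and pos: "\<And>x. x \<in> S \<Longrightarrow> h x > 0"
  shows "convex_on S (\<lambda>x. inverse (h x))"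
  unfolding convex_on_def
proof (intro conjI ballI allI impI)
  show "convex S" using h by (rule concave_on_imp_convex)
  fix x y and u v :: real
  assume x: "x \<in> S" and y: "y \<in> S" and u: "u \<ge> 0" and v: "v \<ge> 0" and uv: "u + v = 1"
  have comb_pos: "u * h x + v * h y > 0"
    using pos[OF x] pos[OF y] u v uv
    by (cases "u = 0") (auto intro: add_pos_nonneg)
  have "u * h x + v * h y \<le> h (u *\<^sub>R x + v *\<^sub>R y)"
    using h x y u v uv by (auto simp: concave_on_iff)
  then have "inverse (h (u *\<^sub>R x + v *\<^sub>R y)) \<le> inverse (u * h x + v * h y)"
    using comb_pos by (rule le_imp_inverse_le)
  also have "\<dots> \<le> u * inverse (h x) + v * inverse (h y)"
    using convex_on_inverse[of "{0<..}"] pos[OF x] pos[OF y] u v uv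
    by (auto simp: convex_on_def)
  finally show "inverse (h (u *\<^sub>R x + v *\<^sub>R y)) \<le> u * inverse (h x) + v * inverse (h y)" .
qed

lemma concave_on_of_convex_inverse_homogeneous:
  fixes h :: "'a::real_vector \<Rightarrow> real"
  assumes cvx: "convex_on S (\<lambda>x. inverse (h x))"
    and cone: "\<And>c x. x \<in> S \<Longrightarrow> c > 0 \<Longrightarrow> c *\<^sub>R x \<in> S"
    and pos: "\<And>x. x \<in> S \<Longrightarrow> h x > 0"
    and hom: "\<And>c x. x \<in> S \<Longrightarrow> c > 0 \<Longrightarrow> h (c *\<^sub>R x) = c * h x"
  shows "concave_on S h"
  unfolding concave_on_iff
proof (intro conjI ballI allI impI)
  have S: "convex S" using cvx by (rule convex_on_imp_convex)
  then show "convex S" .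
  fix x y and u v :: real
  assume x: "x \<in> S" and y: "y \<in> S" and u: "u \<ge> 0" and v: "v \<ge> 0" and uv: "u + v = 1"
  define a b where "a = h x" and "b = h y"
  have a: "a > 0" and b: "b > 0" using pos x y by (auto simp: a_def b_def)
  define s where "s = u * a + v * b"
  have s: "s > 0"
    using a b u v uv by (cases "u = 0") (auto simp: s_def intro: add_pos_nonneg)
  define x' y' where "x' = inverse a *\<^sub>R x" and "y' = inverse b *\<^sub>R y"
  have x': "x' \<in> S" and y': "y' \<in> S" using cone x y a b by (auto simp: x'_def y'_def)
  have hx': "h x' = 1" and hy': "h y' = 1"
    using hom x y a b by (auto simp: x'_def y'_def a_def b_def)
  define p q where "p = u * a / s" and "q = v * b / s"
  have p: "p \<ge> 0" and q: "q \<ge> 0" and pq: "p + q = 1"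
    using a b s u v by (auto simp: p_def q_def s_def add_divide_distrib[symmetric])
  define z where "z = p *\<^sub>R x' + q *\<^sub>R y'"
  have z: "z \<in> S" unfolding z_def using S x' y' p q pq by (rule convexD)
  have "inverse (h z) \<le> p * inverse (h x') + q * inverse (h y')"
    using cvx x' y' p q pq by (auto simp: convex_on_def z_def)
  then have "inverse (h z) \<le> 1" using hx' hy' pq by simp
  then have hz: "h z \<ge> 1" using pos[OF z] by (simp add: inverse_le_1_iff)
  have "u *\<^sub>R x + v *\<^sub>R y = s *\<^sub>R z"
    using a b s by (simp add: z_def x'_def y'_def p_def q_def scaleR_add_right field_simps)
  then have "h (u *\<^sub>R x + v *\<^sub>R y) = s * h z" using hom[OF z s] by simp
  also have "\<dots> \<ge> s" using hz s by simp
  finally show "u * h x + v * h y \<le> h (u *\<^sub>R x + v *\<^sub>R y)" by (simp add: s_def a_def b_def)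
qed

lemma concave_on_iff_convex_inverse_homogeneous:
  fixes h :: "'a::real_vector \<Rightarrow> real"
  assumes "\<And>c x. x \<in> S \<Longrightarrow> c > 0 \<Longrightarrow> c *\<^sub>R x \<in> S"
    and "\<And>x. x \<in> S \<Longrightarrow> h x > 0"
    and "\<And>c x. x \<in> S \<Longrightarrow> c > 0 \<Longrightarrow> h (c *\<^sub>R x) = c * h x"
  shows "concave_on S h \<longleftrightarrow> convex_on S (\<lambda>x. inverse (h x))"
proof
  show "convex_on S (\<lambda>x. inverse (h x))" if "concave_on S h"
    using that assms(2) by (rule convex_on_inverse_of_concave)
  show "concave_on S h" if "convex_on S (\<lambda>x. inverse (h x))"
    using that assms by (rule concave_on_of_convex_inverse_homogeneous)
qed

lemma Euler_identity_homogeneous: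
  fixes f :: "'a::real_normed_vector \<Rightarrow> real"
  assumes deriv: "(f has_derivative D) (at x)"
    and hom: "\<And>c. c > 0 \<Longrightarrow> f (c *\<^sub>R x) = c * f x"
  shows "D x = f x"
proof -
  have "((\<lambda>c. c *\<^sub>R x) has_derivative (\<lambda>t. t *\<^sub>R x)) (at 1)"
    by (auto intro!: derivative_eq_intros)
  from diff_chain_at[OF this] deriv
  have "((\<lambda>c. f (c *\<^sub>R x)) has_derivative (\<lambda>t. D (t *\<^sub>R x))) (at 1)"
    by (simp add: o_def)
  then have "((\<lambda>c. c * f x) has_derivative (\<lambda>t. D (t *\<^sub>R x))) (at 1)"
    by (rule has_derivative_transform_within_open[where s="{0<..}"]) (auto simp: hom)
  moreover have "((\<lambda>c. c * f x) has_derivative (\<lambda>t. t * f x)) (at 1)"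
    by (auto intro!: derivative_eq_intros)
  ultimately have "(\<lambda>t. D (t *\<^sub>R x)) = (\<lambda>t. t * f x)"
    by (rule has_derivative_unique)
  then show ?thesis by (metis mult_1 scaleR_one)
qed

lemma open_Gamma_plus: "open (Gamma_plus :: (real ^ 'n) set)"
proof -
  have "open (\<Inter>i\<in>UNIV. {x::real^'n. x $ i > 0})"
    by (intro open_INT) (simp_all add: open_halfspace_component_gt_cart)
  moreover have "(\<Inter>i\<in>UNIV. {x::real^'n. x $ i > 0}) = Gamma_plus"
    by (auto simp: Gamma_plus_def)
  ultimately show ?thesis by (simp only:)
qed

lemma scaleR_in_Gamma_plus: "x \<in> Gamma_plus \<Longrightarrow> c > 0 \<Longrightarrow> c *\<^sub>R x \<in> Gamma_plus"
  by (simp add: Gamma_plus_def)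

lemma inv_coords_in_Gamma_plus: "x \<in> Gamma_plus \<Longrightarrow> inv_coords x \<in> Gamma_plus"
  by (simp add: Gamma_plus_def inv_coords_def)

lemma inv_coords_scaleR: "inv_coords (c *\<^sub>R x) = inverse c *\<^sub>R inv_coords x"
  by (simp add: inv_coords_def vec_eq_iff)

lemma smooth_on_imp_differentiable_on: "smooth_on S f \<Longrightarrow> f differentiable_on S"
  unfolding smooth_on_def by (metis higher_differentiable_on.simps(2))

lemma homogeneous1_strictly_monotone_pos:
  fixes f :: "real ^ 'n \<Rightarrow> real"
  assumes diff: "f differentiable_on Gamma_plus" and hom: "homogeneous1 f"
    and mono: "strictly_monotone f" and x: "x \<in> Gamma_plus"
  shows "f x > 0"
proof -
  define D where "D = frechet_derivative f (at x)"
  have "f differentiable at x"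
    using diff x open_Gamma_plus differentiable_on_eq_differentiable_at by blast
  then have deriv: "(f has_derivative D) (at x)"
    unfolding D_def by (rule frechet_derivative_works[THEN iffD1])
  have "f (c *\<^sub>R x) = c * f x" if "c > 0" for c
    using hom x that unfolding homogeneous1_def by blast
  then have "f x = D x"
    by (rule Euler_identity_homogeneous[OF deriv, symmetric])
  also have "\<dots> = D (\<Sum>i\<in>UNIV. x $ i *\<^sub>R axis i 1)"
    using basis_expansion[of x] by (simp add: scalar_mult_eq_scaleR)
  also have "\<dots> = (\<Sum>i\<in>UNIV. x $ i * D (axis i 1))"
    using has_derivative_linear[OF deriv] by (simp add: linear_sum linear_cmul)
  also have "\<dots> > 0"
    using x mono by (intro sum_pos) (auto simp: Gamma_plus_def strictly_monotone_def D_def)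
  finally show ?thesis .
qed

theorem corollary2p4:
  fixes f :: "real ^ 'n \<Rightarrow> real"
  assumes "smooth_on Gamma_plus f"
    and "homogeneous1 f"
    and "strictly_monotone f"
  shows "f \<in> class_C \<longleftrightarrow>
           (concave_on Gamma_plus f \<and> concave_on Gamma_plus (fminus1 f))"
proof -
  have f_pos: "f x > 0" if "x \<in> Gamma_plus" for x
    using homogeneous1_strictly_monotone_pos smooth_on_imp_differentiable_on assms that by blast
  have pos: "fminus1 f x > 0" if "x \<in> Gamma_plus" for x
    using f_pos[OF inv_coords_in_Gamma_plus[OF that]] by (simp add: fminus1_def)
  have hom: "fminus1 f (c *\<^sub>R x) = c * fminus1 f x" if "x \<in> Gamma_plus" "c > 0" for c x
    using assms(2) inv_coords_in_Gamma_plus[OF that(1)] that(2)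
    by (simp add: fminus1_def inv_coords_scaleR homogeneous1_def)
  have "fstar f = (\<lambda>x. - inverse (fminus1 f x))"
    by (simp add: fun_eq_iff fstar_def fminus1_def)
  then have "concave_on Gamma_plus (fstar f) \<longleftrightarrow> concave_on Gamma_plus (fminus1 f)"
    using concave_on_iff_convex_inverse_homogeneous[OF scaleR_in_Gamma_plus pos hom]
    by (simp add: convex_on_iff_concave)
  then show ?thesis using assms by (auto simp: class_C_def)
qed

end
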